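(* Under the Standing Setup and Assumption (G) described in the context, $$\mathcal{E}(PC_{f,\mathcal{T}})\ \ge\ \max_{\alpha\in V_k}\big[\mathcal{E}(f\oplus\varphi_\alpha)\big]^{2^s},$$ where $V_k\subseteq\mathbf{F}_2^n$ is the subspace spanned by the first $k$ standard basis vectors.
   Context: Standing Setup. $f:\mathbf{F}_2^n\to\mathbf{F}_2$ is a Boolean function. $\mathbf{x}_1,\ldots,\mathbf{x}_n$ are binary sequences, $\mathbf{x}_j=(x_j(t))_{t\ge0}$, with $\mathbf{x}_j$ periodic of period $T_j$, i.e. $x_j(t)=x_j(t \bmod T_j)$. Let $s\ge1$ and integers $0=\ell_1<\ell_2<\cdots<\ell_{s+1}=k\le n$; variable $j$ belongs to block $i$ if $\ell_i<j\le\ell_{i+1}$. For $1\le i\le s$, $M_i=q_i\,\mathrm{lcm}(T_{\ell_i+1},\ldots,T_{\ell_{i+1}})$ with $q_i$ a positive integer. For $c=\sum_{i=1}^s c_i2^{i-1}\in\{0,\ldots,2^s-1\}$ with $c_i\in\{0,1\}$, put $\tau_c=\sum_{i=1}^s c_iM_i$, and $\mathcal{T}=\{\tau_c\}$. The parity-check sequence is $PC_{f,\mathcal{T}}(t)=\bigoplus_{c=0}^{2^s-1} f\big(x_1(t+\tau_c),\ldots,x_n(t+\tau_c)\big)$. The bias of a Boolean function $h$ of $m$ variables is $\mathcal{E}(h)=2^{-m}\sum_{x\in\mathbf{F}_2^m}(-1)^{h(x)}$. The bias $\mathcal{E}(PC_{f,\mathcal{T}})$ is the bias of $PC_{f,\mathcal{T}}(t)$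 (for a fixed $t\ge0$) viewed as a Boolean function of the $T_1+\cdots+T_n$ bits $x_j(0),\ldots,x_j(T_j-1)$, $1\le j\le n$; equivalently $\mathbb{E}[(-1)^{PC_{f,\mathcal{T}}(t)}]$ when these bits are independent and uniform. Assumption (G): (i) for every $j$ with $k<j\le n$, the $2^s$ integers $\tau_c$ are pairwise incongruent modulo $T_j$; (ii) for every $i\in\{1,\ldots,s\}$ and every $j$ in block $i$, the $2^{s-1}$ integers $\sum_{l\ne i}c_lM_l$ ($c_l\in\{0,1\}$) are pairwise incongruent modulo $T_j$. For $\alpha\in\mathbf{F}_2^n$, $\varphi_\alpha$ is the linear function $x\mapsto\alpha\cdot x=\bigoplus_{j}\alpha_jx_j$. *)

theory Defs
  imports Complex_Main "HOL-Library.FuncSet"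
begin

definition F2vec :: "nat \<Rightarrow> (nat \<Rightarrow> bool) set" where
  "F2vec n = Pi\<^sub>E {1..n} (\<lambda>_. UNIV)"

definition sgn1 :: "bool \<Rightarrow> real" where
  "sgn1 b = (if b then -1 else 1)"

definition bias :: "'a set \<Rightarrow> ('a \<Rightarrow> bool) \<Rightarrow> real" where
  "bias D h = (\<Sum>x\<in>D. sgn1 (h x)) / real (card D)"

definition xor_set :: "'a set \<Rightarrow> ('a \<Rightarrow> bool) \<Rightarrow> bool" where
  "xor_set A P = odd (card {a\<in>A. P a})"

definition lin_fun :: "nat \<Rightarrow> (nat \<Rightarrow> bool) \<Rightarrow> (nat \<Rightarrow> bool) \<Rightarrow> bool" where
  "lin_fun n \<alpha> x = xor_set {1..n} (\<lambda>j. \<alpha> j \<and> x j)"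

definition Vk :: "nat \<Rightarrow> nat \<Rightarrow> (nat \<Rightarrow> bool) set" where
  "Vk n k = {\<alpha>\<in>F2vec n. \<forall>j\<in>{k<..n}. \<not> \<alpha> j}"

definition Mblk :: "(nat \<Rightarrow> nat) \<Rightarrow> (nat \<Rightarrow> nat) \<Rightarrow> (nat \<Rightarrow> nat) \<Rightarrow> nat \<Rightarrow> nat" where
  "Mblk q l T i = q i * Lcm (T ` {l i + 1 .. l (Suc i)})"

text \<open>tau_c = sum_i c_i M_i where c = sum_i c_i 2^(i-1).\<close>
definition tau :: "nat \<Rightarrow> (nat \<Rightarrow> nat) \<Rightarrow> nat \<Rightarrow> nat" where
  "tau s M c = (\<Sum>i=1..s. (if bit c (i - 1) then M i else 0))"

definition Bits :: "nat \<Rightarrow> (nat \<Rightarrow> nat) \<Rightarrow> (nat \<Rightarrow> nat \<Rightarrow> bool) set" where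
  "Bits n T = Pi\<^sub>E {1..n} (\<lambda>j. Pi\<^sub>E {0..<T j} (\<lambda>_. UNIV))"

text \<open>Parity-check sequence at time t, given initial bits y (x_j(t) = y j (t mod T_j)).\<close>
definition PC :: "nat \<Rightarrow> ((nat \<Rightarrow> bool) \<Rightarrow> bool) \<Rightarrow> (nat \<Rightarrow> nat) \<Rightarrow> nat \<Rightarrow> (nat \<Rightarrow> nat)
                   \<Rightarrow> nat \<Rightarrow> (nat \<Rightarrow> nat \<Rightarrow> bool) \<Rightarrow> bool" where
  "PC n f T s M t y = xor_set {0..<2^s}
      (\<lambda>c. f (restrict (\<lambda>j. y j ((t + tau s M c) mod T j)) {1..n}))"

end

theory Submission
  imports Defs
begin

text \<open>
  The initial bits x_j(r), r < T_j, are modelled by a uniform random point Y of the Boolean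
  cube indexed by the positions (j, r); the c-th term of the parity check evaluates f at the
  vector that reads, for every j, the bit at position (j, (t + tau_c) mod T_j).  Assumption (G)
  says exactly how these reads collide: for j outside V_k all 2^s shifts read distinct bits,
  and for j in block i two shifts read the same bit iff their indices agree after clearing
  bit i - 1.  Abstracting this collision pattern into a "tap scheme", we prove by induction
  on s that E[prod_c g(X_c)] >= (E g)^(2^s) for every real-valued g: the 2^(s+1) shifts split
  into two halves which share exactly the bits of the last block and are exchanged by a
  permutation of all other positions, so one Cauchy-Schwarz step squares the bound.  With
  g = (-1)^(f + phi_alpha), alpha in V_k, the linear factors cancel in pairs, since every
  variable of V_k is read in pairs of equal bits; this gives the corollary.
\<close>

definition cube_avg :: "'a set \<Rightarrow> (('a \<Rightarrow> bool) \<Rightarrow> real) \<Rightarrow> real" where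
  "cube_avg P h = (\<Sum>Y\<in>PiE P (\<lambda>_. UNIV). h Y) / 2 ^ card P"

definition glue :: "'a set \<Rightarrow> ('a \<Rightarrow> bool) \<Rightarrow> ('a \<Rightarrow> bool) \<Rightarrow> 'a \<Rightarrow> bool" where
  "glue I u v = (\<lambda>x. if x \<in> I then u x else v x)"

lemma card_cube: "finite P \<Longrightarrow> card (PiE P (\<lambda>_. UNIV::bool set)) = 2 ^ card P"
  by (simp add: card_PiE)

lemma cube_avg_const: "finite P \<Longrightarrow> cube_avg P (\<lambda>_. c) = c"
  unfolding cube_avg_def by (simp add: card_cube)

lemma cube_avg_cong:
  "(\<And>Y. Y \<in> PiE P (\<lambda>_. UNIV) \<Longrightarrow> h Y = h' Y) \<Longrightarrow> cube_avg P h = cube_avg P h'"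
  unfolding cube_avg_def by (metis (mono_tags, lifting) sum.cong)

lemma cube_avg_mult_left: "cube_avg P (\<lambda>Y. c * h Y) = c * cube_avg P h"
  unfolding cube_avg_def by (simp add: sum_distrib_left)

lemma cube_avg_mult_right: "cube_avg P (\<lambda>Y. h Y * c) = cube_avg P h * c"
  unfolding cube_avg_def by (simp add: sum_distrib_right)

lemma glue_bij:
  assumes "I \<inter> J = {}"
  shows "bij_betw (\<lambda>(u, v). glue I u v)
           (PiE I (\<lambda>_. UNIV) \<times> PiE J (\<lambda>_. UNIV)) (PiE (I \<union> J) (\<lambda>_. UNIV))"
proof (rule bij_betw_byWitness[where f'="\<lambda>Y. (restrict Y I, restrict Y J)"])
  show "\<forall>a\<in>PiE I (\<lambda>_. UNIV) \<times> PiE J (\<lambda>_. UNIV).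
          (\<lambda>Y. (restrict Y I, restrict Y J)) ((\<lambda>(u, v). glue I u v) a) = a"
    using assms by (auto simp: glue_def PiE_def extensional_def fun_eq_iff)
  show "\<forall>a'\<in>PiE (I \<union> J) (\<lambda>_. UNIV).
          (\<lambda>(u, v). glue I u v) ((\<lambda>Y. (restrict Y I, restrict Y J)) a') = a'"
    by (auto simp: glue_def PiE_def extensional_def fun_eq_iff)
qed (auto simp: glue_def PiE_def extensional_def)

lemma cube_avg_split:
  assumes "finite I" "finite J" "I \<inter> J = {}"
  shows "cube_avg (I \<union> J) h = cube_avg I (\<lambda>u. cube_avg J (\<lambda>v. h (glue I u v)))"
proof -
  have "(\<Sum>Y\<in>PiE (I \<union> J) (\<lambda>_. UNIV). h Y)
      = (\<Sum>x\<in>PiE I (\<lambda>_. UNIV) \<times> PiE J (\<lambda>_. UNIV). h ((\<lambda>(u, v). glue I u v) x))"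
    using sum.reindex_bij_betw[OF glue_bij[OF assms(3)], of h] by simp
  also have "\<dots> = (\<Sum>u\<in>PiE I (\<lambda>_. UNIV). \<Sum>v\<in>PiE J (\<lambda>_. UNIV). h (glue I u v))"
    by (subst sum.cartesian_product) (simp add: case_prod_beta)
  finally have sum_eq: "(\<Sum>Y\<in>PiE (I \<union> J) (\<lambda>_. UNIV). h Y)
      = (\<Sum>u\<in>PiE I (\<lambda>_. UNIV). \<Sum>v\<in>PiE J (\<lambda>_. UNIV). h (glue I u v))" .
  have "card (I \<union> J) = card I + card J" using assms card_Un_disjoint by blast
  then show ?thesis unfolding cube_avg_def sum_eq
    by (simp add: sum_divide_distrib[symmetric] power_add field_simps)
qed

lemma cube_avg_reindex:
  assumes "bij_betw \<phi> (PiE I (\<lambda>_. UNIV)) (PiE J (\<lambda>_. UNIV))" "card I = card J"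
  shows "cube_avg I (\<lambda>Y. h (\<phi> Y)) = cube_avg J h"
  unfolding cube_avg_def using sum.reindex_bij_betw[OF assms(1), of h] assms(2) by simp

lemma restrict_comp_bij:
  assumes "inj_on \<iota> I"
  shows "bij_betw (\<lambda>Y. restrict (Y \<circ> \<iota>) I) (PiE (\<iota> ` I) (\<lambda>_. UNIV)) (PiE I (\<lambda>_. UNIV))"
proof (rule bij_betw_byWitness[where f'="\<lambda>Z. restrict (Z \<circ> inv_into I \<iota>) (\<iota> ` I)"])
  show "\<forall>Y\<in>PiE (\<iota> ` I) (\<lambda>_. UNIV). restrict (restrict (Y \<circ> \<iota>) I \<circ> inv_into I \<iota>) (\<iota> ` I) = Y"
    using assms by (auto simp: fun_eq_iff PiE_def extensional_def)
  show "\<forall>Z\<in>PiE I (\<lambda>_. UNIV). restrict (restrict (Z \<circ> inv_into I \<iota>) (\<iota> ` I) \<circ> \<iota>) I = Z"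
    using assms by (auto simp: fun_eq_iff PiE_def extensional_def)
qed auto

lemma cube_avg_pullback:
  assumes "finite P" "inj_on \<iota> I" "\<iota> ` I \<subseteq> P"
  shows "cube_avg P (\<lambda>Y. h (restrict (Y \<circ> \<iota>) I)) = cube_avg I h"
proof -
  let ?J = "\<iota> ` I"
  have fin: "finite ?J" "finite (P - ?J)" using assms by (auto intro: finite_subset)
  have "cube_avg P (\<lambda>Y. h (restrict (Y \<circ> \<iota>) I))
      = cube_avg ?J (\<lambda>u. cube_avg (P - ?J) (\<lambda>v. h (restrict (glue ?J u v \<circ> \<iota>) I)))"
    using cube_avg_split[OF fin] assms(3) by (simp add: Un_absorb1)
  also have "\<dots> = cube_avg ?J (\<lambda>u. h (restrict (u \<circ> \<iota>) I))"
  proof (intro cube_avg_cong)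
    fix u
    have "restrict (glue ?J u v \<circ> \<iota>) I = restrict (u \<circ> \<iota>) I" for v
      by (intro restrict_ext) (simp add: glue_def)
    then show "cube_avg (P - ?J) (\<lambda>v. h (restrict (glue ?J u v \<circ> \<iota>) I))
             = h (restrict (u \<circ> \<iota>) I)"
      by (simp add: cube_avg_const[OF fin(2)])
  qed
  also have "\<dots> = cube_avg I h"
    using cube_avg_reindex[OF restrict_comp_bij[OF assms(2)]] card_image[OF assms(2)] by simp
  finally show ?thesis .
qed

text \<open>Jensen's inequality for the square (the variance is nonnegative).\<close>
lemma cube_avg_square_le:
  assumes "finite P"
  shows "(cube_avg P h)^2 \<le> cube_avg P (\<lambda>Y. (h Y)^2)"
proof -
  let ?D = "PiE P (\<lambda>_. UNIV::bool set)"
  let ?N = "real (card ?D)"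
  have N: "?N = 2 ^ card P" using card_cube[OF assms] by simp
  define m where "m = cube_avg P h"
  have sum_h: "sum h ?D = ?N * m" unfolding m_def cube_avg_def N by simp
  have "0 \<le> (\<Sum>Y\<in>?D. (h Y - m)^2)" by (simp add: sum_nonneg)
  also have "\<dots> = (\<Sum>Y\<in>?D. (h Y)^2) - 2 * m * sum h ?D + ?N * m^2"
    by (simp add: power2_diff sum.distrib sum_subtractf sum_distrib_left[symmetric]
        sum_distrib_right[symmetric] algebra_simps)
  also have "\<dots> = (\<Sum>Y\<in>?D. (h Y)^2) - ?N * m^2" unfolding sum_h by (simp add: power2_eq_square)
  finally have "m^2 \<le> (\<Sum>Y\<in>?D. (h Y)^2) / ?N" using N by (simp add: field_simps)
  then show ?thesis unfolding m_def cube_avg_def[of P "\<lambda>Y. (h Y)^2"] N .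
qed

lemma cube_avg_independent_product:
  assumes fin: "finite A" "finite C" and AC: "A \<inter> C = {}"
    and depF: "\<And>Y Y'. (\<forall>x\<in>A. Y x = Y' x) \<Longrightarrow> F Y = F Y'"
    and depH: "\<And>Y Y'. (\<forall>x\<in>C. Y x = Y' x) \<Longrightarrow> H Y = H Y'"
  shows "cube_avg (A \<union> C) (\<lambda>Y. F Y * H Y) = cube_avg (A \<union> C) F * cube_avg (A \<union> C) H"
proof -
  define w0 :: "'a \<Rightarrow> bool" where "w0 = (\<lambda>_. False)"
  define F\<^sub>A where "F\<^sub>A a = F (glue A a w0)" for a
  define H\<^sub>C where "H\<^sub>C w = H (glue A w0 w)" for w
  have F_eq: "F (glue A a w) = F\<^sub>A a" for a w
    unfolding F\<^sub>A_def by (rule depF) (simp add: glue_def)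
  have H_eq: "H (glue A a w) = H\<^sub>C w" for a w
    unfolding H\<^sub>C_def by (rule depH) (use AC in \<open>auto simp: glue_def\<close>)
  have "cube_avg (A \<union> C) (\<lambda>Y. F Y * H Y) = cube_avg A (\<lambda>a. cube_avg C (\<lambda>w. F\<^sub>A a * H\<^sub>C w))"
    by (simp only: cube_avg_split[OF fin AC] F_eq H_eq)
  also have "\<dots> = cube_avg A F\<^sub>A * cube_avg C H\<^sub>C"
    by (simp only: cube_avg_mult_left cube_avg_mult_right)
  also have "cube_avg A F\<^sub>A = cube_avg (A \<union> C) F"
    by (simp only: cube_avg_split[OF fin AC] F_eq cube_avg_const[OF fin(2)])
  also have "cube_avg C H\<^sub>C = cube_avg (A \<union> C) H"
    by (simp only: cube_avg_split[OF fin AC] H_eq cube_avg_const[OF fin(1)])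
  finally show ?thesis .
qed

text \<open>Conditioned on the shared
  coordinates S, G and G \<circ> \<pi> are then independent and identically distributed, so the
  average of their product is the average of a square, which dominates the squared average.\<close>
lemma cube_avg_square_le_twisted_product:
  fixes G :: "('a \<Rightarrow> bool) \<Rightarrow> real"
  assumes fin: "finite P" and SP: "S \<subseteq> P" and AP: "A \<subseteq> P" and SA: "S \<inter> A = {}"
    and dep: "\<And>Y Y'. (\<forall>x\<in>S \<union> A. Y x = Y' x) \<Longrightarrow> G Y = G Y'"
    and perm: "bij_betw \<pi> (P - S) (P - S)" and fix_S: "\<And>x. x \<in> S \<Longrightarrow> \<pi> x = x"
    and moves_A: "\<pi> ` A \<inter> A = {}"
  shows "(cube_avg P G)^2 \<le> cube_avg P (\<lambda>Y. G Y * G (Y \<circ> \<pi>))"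
proof -
  define Q where "Q = P - S"
  define C where "C = Q - A"
  have P_eq: "P = S \<union> Q" "S \<inter> Q = {}" using SP unfolding Q_def by auto
  have Q_eq: "Q = A \<union> C" "A \<inter> C = {}" using AP SA unfolding C_def Q_def by auto
  have fin': "finite S" "finite Q" "finite A" "finite C"
    using fin SP AP unfolding Q_def C_def by (auto intro: finite_subset)
  have \<pi>_Q: "\<pi> x \<in> Q" if "x \<in> Q" for x using perm that bij_betwE unfolding Q_def by blast
  define \<alpha> where "\<alpha> u = cube_avg Q (\<lambda>v. G (glue S u v))" for u
  \<comment> \<open>conditionally on the shared coordinates S, the two factors are independent \<dots>\<close>
  have cond_product: "cube_avg Q (\<lambda>v. G (glue S u v) * G (glue S u v \<circ> \<pi>))
      = \<alpha> u * cube_avg Q (\<lambda>v. G (glue S u v \<circ> \<pi>))" for u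
    unfolding \<alpha>_def Q_eq(1)
  proof (rule cube_avg_independent_product[OF fin'(3,4) Q_eq(2)])
    show "G (glue S u Y) = G (glue S u Y')" if "\<forall>x\<in>A. Y x = Y' x" for Y Y'
      by (rule dep) (use that in \<open>auto simp: glue_def\<close>)
    show "G (glue S u Y \<circ> \<pi>) = G (glue S u Y' \<circ> \<pi>)" if "\<forall>x\<in>C. Y x = Y' x" for Y Y'
    proof (rule dep)
      have "\<pi> x \<in> S \<union> C" if "x \<in> S \<union> A" for x
      proof (cases "x \<in> S")
        case False
        then have "x \<in> A" "x \<in> Q" using that Q_eq(1) by auto
        then have "\<pi> x \<in> Q" "\<pi> x \<notin> A" using \<pi>_Q moves_A by auto
        then show ?thesis unfolding C_def by simp
      qed (simp add: fix_S)
      then show "\<forall>x\<in>S \<union> A. (glue S u Y \<circ> \<pi>) x = (glue S u Y' \<circ> \<pi>) x"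
        using \<open>\<forall>x\<in>C. Y x = Y' x\<close> by (auto simp: glue_def)
    qed
  qed
  \<comment> \<open>\<dots> and identically distributed, since \<pi> permutes the remaining coordinates\<close>
  have cond_twisted: "cube_avg Q (\<lambda>v. G (glue S u v \<circ> \<pi>)) = \<alpha> u" for u
  proof -
    have "cube_avg Q (\<lambda>v. G (glue S u v \<circ> \<pi>)) = cube_avg Q (\<lambda>v. G (glue S u (restrict (v \<circ> \<pi>) Q)))"
    proof (intro cube_avg_cong dep)
      have "x \<in> S \<or> x \<in> Q \<and> \<pi> x \<in> Q \<and> \<pi> x \<notin> S" if "x \<in> S \<union> A" for x
        using that \<pi>_Q Q_eq(1) P_eq(2) by blast
      then show "\<forall>x\<in>S \<union> A. (glue S u v \<circ> \<pi>) x = glue S u (restrict (v \<circ> \<pi>) Q) x" for v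
        using fix_S unfolding glue_def by fastforce
    qed
    also have "\<dots> = \<alpha> u" unfolding \<alpha>_def
      using perm by (intro cube_avg_pullback[OF fin'(2)]) (auto simp: Q_def bij_betw_def)
    finally show ?thesis .
  qed
  have "cube_avg P (\<lambda>Y. G Y * G (Y \<circ> \<pi>)) = cube_avg S (\<lambda>u. (\<alpha> u)^2)"
    unfolding P_eq(1) cube_avg_split[OF fin'(1,2) P_eq(2)] cond_product cond_twisted
    by (simp add: power2_eq_square)
  moreover have "cube_avg P G = cube_avg S \<alpha>"
    unfolding P_eq(1) \<alpha>_def by (rule cube_avg_split[OF fin'(1,2) P_eq(2)])
  ultimately show ?thesis using cube_avg_square_le[OF fin'(1), of \<alpha>] by simp
qed

lemma bij_betw_matching:
  assumes "\<And>x y. x \<in> D \<Longrightarrow> y \<in> D \<Longrightarrow> F1 x = F1 y \<longleftrightarrow> F2 x = F2 y"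
  shows "bij_betw (F2 \<circ> inv_into D F1) (F1 ` D) (F2 ` D)"
    and "\<And>x. x \<in> D \<Longrightarrow> (F2 \<circ> inv_into D F1) (F1 x) = F2 x"
proof -
  have inv_back: "inv_into D F1 (F1 x) \<in> D" "F1 (inv_into D F1 (F1 x)) = F1 x" if "x \<in> D" for x
    using that by (auto intro: inv_into_into f_inv_into_f)
  show match: "(F2 \<circ> inv_into D F1) (F1 x) = F2 x" if "x \<in> D" for x
    using inv_back[OF that] assms that by auto
  show "bij_betw (F2 \<circ> inv_into D F1) (F1 ` D) (F2 ` D)"
    unfolding bij_betw_def inj_on_def using match assms by (auto simp: image_iff)
qed

definition swap_along :: "'a set \<Rightarrow> ('a \<Rightarrow> 'a) \<Rightarrow> 'a \<Rightarrow> 'a" where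
  "swap_along A \<phi> x = (if x \<in> A then \<phi> x else if x \<in> \<phi> ` A then inv_into A \<phi> x else x)"

lemma swap_along_bij:
  assumes "bij_betw \<phi> A B" "A \<inter> B = {}" "A \<subseteq> Q" "B \<subseteq> Q"
  shows "bij_betw (swap_along A \<phi>) Q Q"
proof -
  have img: "\<phi> ` A = B" using assms(1) by (simp add: bij_betw_def)
  have "swap_along A \<phi> (swap_along A \<phi> x) = x" for x
    using assms img by (auto simp: swap_along_def bij_betw_def inv_into_into)
  moreover have "swap_along A \<phi> x \<in> Q" if "x \<in> Q" for x
    using assms img that by (auto simp: swap_along_def bij_betw_def inv_into_into)
  ultimately show ?thesis by (intro bij_betw_byWitness[where f'="swap_along A \<phi>"]) auto
qed

lemma add_pow_eq_or: "(c::nat) < 2^s \<Longrightarrow> c + 2^s = or c (2^s)"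
  by (rule disjunctive_add) (metis bit_exp_iff bit_iff_odd div_less even_zero)

lemma not_bit_below_pow: "(c::nat) < 2^s \<Longrightarrow> \<not> bit c s"
  by (simp add: bit_iff_odd)

lemma bit_add_pow: "(c::nat) < 2^s \<Longrightarrow> bit (c + 2^s) i \<longleftrightarrow> i = s \<or> bit c i"
  by (auto simp: add_pow_eq_or bit_or_iff bit_exp_iff)

lemma unset_bit_le: "unset_bit i (c::nat) \<le> c"
  by (metis of_nat_le_iff of_nat_unset_bit_eq unset_bit_less_eq)

lemma unset_bit_below_pow: "(c::nat) < 2^s \<Longrightarrow> unset_bit s c = c"
  by (metis bit_eqI bit_unset_bit_iff not_bit_below_pow)

lemma unset_bit_add_pow_top: "(c::nat) < 2^s \<Longrightarrow> unset_bit s (c + 2^s) = c"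
  by (rule bit_eqI) (auto simp: bit_add_pow bit_unset_bit_iff dest: not_bit_below_pow)

lemma unset_bit_add_pow:
  assumes "i \<noteq> s" "(c::nat) < 2^s"
  shows "unset_bit i (c + 2^s) = unset_bit i c + 2^s"
proof -
  have "unset_bit i c < 2^s" using unset_bit_le[of i c] assms(2) by linarith
  then show ?thesis
    by (intro bit_eqI) (use assms in \<open>auto simp: bit_add_pow bit_unset_bit_iff\<close>)
qed

lemma prod_lessThan_double:
  "(\<Prod>c<2^Suc s. f c) = (\<Prod>c<2^s. f c) * (\<Prod>c<2^s. f (c + 2^s))"
  for f :: "nat \<Rightarrow> 'a::comm_monoid_mult"
proof -
  have "{..<2^Suc s} = {..<2^s} \<union> {2^s..<2^s + 2^s::nat}" by auto
  then have "(\<Prod>c<2^Suc s. f c) = prod f ({..<2^s} \<union> {0 + 2^s..<2^s + 2^s})" by simp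
  also have "\<dots> = prod f {..<2^s} * prod f {0 + 2^s..<2^s + 2^s}"
    by (rule prod.union_disjoint) auto
  also have "prod f {0 + 2^s..<2^s + 2^s} = (\<Prod>c<2^s. f (c + 2^s))"
    by (simp only: prod.shift_bounds_nat_ivl atLeast0LessThan)
  finally show ?thesis .
qed

text \<open>If q does not change when bit i of its argument is cleared and q c * q c = 1, then the
  product of q over all c < 2^s is 1: the indices pair up into equal factors.\<close>
lemma prod_unset_bit_invariant_involutive:
  fixes q :: "nat \<Rightarrow> 'a::comm_monoid_mult"
  assumes "i < s" "\<And>c. c < 2^s \<Longrightarrow> q (unset_bit i c) = q c" "\<And>c. q c * q c = 1"
  shows "(\<Prod>c<2^s. q c) = 1"
  using assms
proof (induction s arbitrary: q)
  case (Suc s)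
  show ?case
  proof (cases "i = s")
    case True
    have "q (c + 2^s) = q c" if "c < 2^s" for c
      using Suc.prems(2)[of "c + 2^s"] that True by (simp add: unset_bit_add_pow_top)
    then have "(\<Prod>c<2^s. q (c + 2^s)) = (\<Prod>c<2^s. q c)" by (intro prod.cong) simp_all
    then have "(\<Prod>c<2^Suc s. q c) = (\<Prod>c<2^s. q c * q c)"
      unfolding prod_lessThan_double by (simp add: prod.distrib)
    then show ?thesis by (simp add: Suc.prems(3))
  next
    case False
    then have "i < s" using Suc.prems(1) by simp
    have high: "q (unset_bit i c + 2^s) = q (c + 2^s)" if "c < 2^s" for c
      using Suc.prems(2)[of "c + 2^s"] that unset_bit_add_pow[OF False] by simp
    have "(\<Prod>c<2^s. q c) = 1" "(\<Prod>c<2^s. q (c + 2^s)) = 1"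
      using Suc.IH[OF \<open>i < s\<close>] Suc.prems(2,3) high by auto
    then show ?thesis unfolding prod_lessThan_double by simp
  qed
qed simp

definition positions :: "nat \<Rightarrow> (nat \<Rightarrow> nat) \<Rightarrow> (nat \<times> nat) set" where
  "positions n T = Sigma {1..n} (\<lambda>j. {0..<T j})"

definition tapped :: "nat \<Rightarrow> (nat \<Rightarrow> nat \<Rightarrow> nat) \<Rightarrow> nat \<Rightarrow> (nat \<times> nat \<Rightarrow> bool) \<Rightarrow> nat \<Rightarrow> bool" where
  "tapped n p c Y = restrict (\<lambda>j. Y (j, p c j)) {1..n}"

text \<open>Collision pattern of a variable in block \<beta> (\<beta> = 0: outside all blocks): the shifts c
  and c' read the same bit iff they agree, resp. agree after clearing bit \<beta> - 1.\<close>
definition same_tap :: "nat \<Rightarrow> nat \<Rightarrow> nat \<Rightarrow> bool" where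
  "same_tap \<beta> c c' \<longleftrightarrow> (if \<beta> = 0 then c = c' else unset_bit (\<beta> - 1) c = unset_bit (\<beta> - 1) c')"

text \<open>The abstract situation of Assumption (G): every variable j has a block index b j \<le> s,
  reads inside its period, and two shifts read the same bit exactly according to same_tap.\<close>
definition tap_scheme :: "nat \<Rightarrow> (nat \<Rightarrow> nat) \<Rightarrow> (nat \<Rightarrow> nat \<Rightarrow> nat) \<Rightarrow> (nat \<Rightarrow> nat) \<Rightarrow> nat \<Rightarrow> bool" where
  "tap_scheme n T p b s \<longleftrightarrow> (\<forall>j\<in>{1..n}. b j \<le> s \<and> (\<forall>c<2^s. p c j < T j) \<and>
      (\<forall>c<2^s. \<forall>c'<2^s. p c j = p c' j \<longleftrightarrow> same_tap (b j) c c'))"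

lemma finite_positions: "finite (positions n T)"
  unfolding positions_def by auto

lemma same_tap_halves:
  assumes "\<beta> \<le> Suc s" "\<beta> \<noteq> Suc s" "c < 2^s" "c' < 2^s"
  shows "\<not> same_tap \<beta> c (c' + 2^s)"
    and "same_tap \<beta> (c + 2^s) (c' + 2^s) \<longleftrightarrow> same_tap \<beta> c c'"
proof -
  have "\<not> same_tap \<beta> c (c' + 2^s) \<and> (same_tap \<beta> (c + 2^s) (c' + 2^s) \<longleftrightarrow> same_tap \<beta> c c')"
  proof (cases "\<beta> = 0")
    case False
    then have "\<beta> - 1 \<noteq> s" using assms(1,2) by auto
    moreover have "unset_bit (\<beta> - 1) c < 2^s" using unset_bit_le[of "\<beta> - 1" c] assms(3) by linarith
    ultimately show ?thesis
      using False assms(3,4) by (simp add: same_tap_def unset_bit_add_pow)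
  qed (use assms(3) in \<open>simp add: same_tap_def\<close>)
  then show "\<not> same_tap \<beta> c (c' + 2^s)" "same_tap \<beta> (c + 2^s) (c' + 2^s) \<longleftrightarrow> same_tap \<beta> c c'"
    by auto
qed

lemma same_tap_top:
  assumes "c < 2^s" "c' < 2^s"
  shows "same_tap (Suc s) (c + 2^s) c" and "same_tap (Suc s) c c' \<longleftrightarrow> c = c'"
  using assms by (simp_all add: same_tap_def unset_bit_add_pow_top unset_bit_below_pow)

text \<open>Restricting to the lower half of the shifts turns the last block into free variables.\<close>
lemma tap_scheme_restrict:
  assumes "tap_scheme n T p b (Suc s)"
  shows "tap_scheme n T p (\<lambda>j. if b j = Suc s then 0 else b j) s"
  unfolding tap_scheme_def
proof
  fix j assume j: "j \<in> {1..n}"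
  have b: "b j \<le> Suc s" and lt: "\<forall>c<2^Suc s. p c j < T j"
    and eq: "\<forall>c<2^Suc s. \<forall>c'<2^Suc s. p c j = p c' j \<longleftrightarrow> same_tap (b j) c c'"
    using assms j unfolding tap_scheme_def by auto
  have "p c j = p c' j \<longleftrightarrow> same_tap (if b j = Suc s then 0 else b j) c c'"
    if "c < 2^s" "c' < 2^s" for c c'
    using eq that same_tap_top(2)[OF that] by (auto simp: same_tap_def)
  then show "(if b j = Suc s then 0 else b j) \<le> s \<and> (\<forall>c<2^s. p c j < T j) \<and>
      (\<forall>c<2^s. \<forall>c'<2^s. p c j = p c' j \<longleftrightarrow> same_tap (if b j = Suc s then 0 else b j) c c')"
    using b lt by auto
qed

text \<open>A single shift reads every variable exactly once, so it sees a uniform input of f.\<close>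
lemma tapped_single:
  assumes "\<forall>j\<in>{1..n}. p 0 j < T j"
  shows "cube_avg (positions n T) (\<lambda>Y. g (tapped n p 0 Y)) = cube_avg {1..n} g"
proof -
  have "tapped n p 0 Y = restrict (Y \<circ> (\<lambda>j. (j, p 0 j))) {1..n}" for Y
    unfolding tapped_def by (simp add: comp_def)
  moreover have "inj_on (\<lambda>j. (j, p 0 j)) {1..n}" by (rule inj_onI) simp
  moreover have "(\<lambda>j. (j, p 0 j)) ` {1..n} \<subseteq> positions n T"
    using assms unfolding positions_def by auto
  ultimately show ?thesis using cube_avg_pullback[OF finite_positions] by simp
qed

lemma tap_scheme_half_swap:
  assumes H: "tap_scheme n T p b (Suc s)"
  defines "S \<equiv> {(j, p c j) | j c. j \<in> {1..n} \<and> b j = Suc s \<and> c < (2::nat)^s}"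
    and "A \<equiv> {(j, p c j) | j c. j \<in> {1..n} \<and> b j \<noteq> Suc s \<and> c < (2::nat)^s}"
  obtains \<pi> where "bij_betw \<pi> (positions n T - S) (positions n T - S)"
    and "\<And>x. x \<in> S \<Longrightarrow> \<pi> x = x" and "\<pi> ` A \<inter> A = {}"
    and "\<And>j c. j \<in> {1..n} \<Longrightarrow> c < 2^s \<Longrightarrow> \<pi> (j, p c j) = (j, p (c + 2^s) j)"
proof -
  have b_le: "b j \<le> Suc s" and p_lt: "\<And>c. c < 2^Suc s \<Longrightarrow> p c j < T j"
    and p_eq: "\<And>c c'. c < 2^Suc s \<Longrightarrow> c' < 2^Suc s \<Longrightarrow> p c j = p c' j \<longleftrightarrow> same_tap (b j) c c'"
    if "j \<in> {1..n}" for j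
    using H that unfolding tap_scheme_def by auto
  define D where "D = {(j, c). j \<in> {1..n} \<and> b j \<noteq> Suc s \<and> c < (2::nat)^s}"
  define F1 where "F1 = (\<lambda>(j, c). (j, p c j))"
  define F2 where "F2 = (\<lambda>(j, c). (j, p (c + 2^s) j))"
  define B where "B = F2 ` D"
  have A_eq: "A = F1 ` D" unfolding A_def F1_def D_def by auto
  have match: "F1 x = F1 y \<longleftrightarrow> F2 x = F2 y" if "x \<in> D" "y \<in> D" for x y
    using that p_eq same_tap_halves(2)[OF b_le] unfolding D_def F1_def F2_def by auto
  have AB: "A \<inter> B = {}"
    using p_eq same_tap_halves(1)[OF b_le] unfolding A_eq B_def D_def F1_def F2_def by fastforce
  have sub: "A \<subseteq> positions n T - S" "B \<subseteq> positions n T - S"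
    using p_lt unfolding A_eq B_def D_def F1_def F2_def S_def positions_def by auto
  define \<phi> where "\<phi> = F2 \<circ> inv_into D F1"
  have \<phi>: "bij_betw \<phi> A B" "\<And>x. x \<in> D \<Longrightarrow> \<phi> (F1 x) = F2 x"
    using bij_betw_matching[of D F1 F2] match unfolding \<phi>_def A_eq B_def by auto
  have img: "\<phi> ` A = B" using \<phi>(1) by (simp add: bij_betw_def)
  show ?thesis
  proof
    show "bij_betw (swap_along A \<phi>) (positions n T - S) (positions n T - S)"
      by (rule swap_along_bij[OF \<phi>(1) AB sub])
    show fix_S: "swap_along A \<phi> x = x" if "x \<in> S" for x
      using that sub img unfolding swap_along_def by auto
    show "swap_along A \<phi> ` A \<inter> A = {}"
      using img AB unfolding swap_along_def by auto
    show "swap_along A \<phi> (j, p c j) = (j, p (c + 2^s) j)" if "j \<in> {1..n}" "c < 2^s" for j c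
    proof (cases "b j = Suc s")
      case True
      then have "(j, p c j) \<in> S" using that unfolding S_def by auto
      moreover have "p (c + 2^s) j = p c j"
        using p_eq[OF that(1)] same_tap_top(1)[OF that(2) that(2)] True that(2) by simp
      ultimately show ?thesis using fix_S by simp
    next
      case False
      then have "(j, c) \<in> D" using that unfolding D_def by simp
      then show ?thesis
        using \<phi>(2) unfolding swap_along_def A_eq F1_def F2_def by force
    qed
  qed
qed

lemma tap_product_square_step:
  fixes g :: "(nat \<Rightarrow> bool) \<Rightarrow> real"
  assumes H: "tap_scheme n T p b (Suc s)"
  defines "G \<equiv> \<lambda>Y. \<Prod>c<2^s. g (tapped n p c Y)"
  shows "(cube_avg (positions n T) G)^2
       \<le> cube_avg (positions n T) (\<lambda>Y. \<Prod>c<2^Suc s. g (tapped n p c Y))"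
proof -
  define P where "P = positions n T"
  define S where "S = {(j, p c j) | j c. j \<in> {1..n} \<and> b j = Suc s \<and> c < (2::nat)^s}"
  define A where "A = {(j, p c j) | j c. j \<in> {1..n} \<and> b j \<noteq> Suc s \<and> c < (2::nat)^s}"
  obtain \<pi> where \<pi>: "bij_betw \<pi> (P - S) (P - S)" "\<And>x. x \<in> S \<Longrightarrow> \<pi> x = x" "\<pi> ` A \<inter> A = {}"
    "\<And>j c. j \<in> {1..n} \<Longrightarrow> c < 2^s \<Longrightarrow> \<pi> (j, p c j) = (j, p (c + 2^s) j)"
    using tap_scheme_half_swap[OF H] unfolding P_def S_def A_def by blast
  have split: "(\<Prod>c<2^Suc s. g (tapped n p c Y)) = G Y * G (Y \<circ> \<pi>)" for Y
  proof -
    have "tapped n p (c + 2^s) Y = tapped n p c (Y \<circ> \<pi>)" if "c < 2^s" for c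
      unfolding tapped_def using \<pi>(4) that by (intro restrict_ext) simp
    then show ?thesis unfolding prod_lessThan_double G_def by simp
  qed
  have read_SA: "(j, p c j) \<in> S \<union> A" if "j \<in> {1..n}" "c < 2^s" for j c
    using that unfolding S_def A_def by (cases "b j = Suc s") auto
  have dep: "G Y = G Y'" if "\<forall>x\<in>S \<union> A. Y x = Y' x" for Y Y'
  proof -
    have "tapped n p c Y = tapped n p c Y'" if "c < 2^s" for c
      unfolding tapped_def using \<open>\<forall>x\<in>S \<union> A. Y x = Y' x\<close> read_SA that
      by (intro restrict_ext) blast
    then show ?thesis unfolding G_def by simp
  qed
  have "p c j < T j" if "j \<in> {1..n}" "c < 2^s" for j c
    using H that unfolding tap_scheme_def by auto
  then have SA: "S \<subseteq> P" "A \<subseteq> P" "S \<inter> A = {}"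
    unfolding S_def A_def P_def positions_def by auto
  have "(cube_avg P G)^2 \<le> cube_avg P (\<lambda>Y. G Y * G (Y \<circ> \<pi>))"
    by (rule cube_avg_square_le_twisted_product[OF _ SA dep \<pi>(1-3)])
      (simp add: P_def finite_positions)
  then show ?thesis unfolding P_def split .
qed

lemma tap_product_ge_power:
  assumes "tap_scheme n T p b s"
  shows "(cube_avg {1..n} g)^(2^s) \<le> cube_avg (positions n T) (\<lambda>Y. \<Prod>c<2^s. g (tapped n p c Y))"
  using assms
proof (induction s arbitrary: b)
  case 0
  then have "\<forall>j\<in>{1..n}. p 0 j < T j" unfolding tap_scheme_def by auto
  then show ?case using tapped_single[of n p T g] by simp
next
  case (Suc s)
  define G where "G Y = (\<Prod>c<2^s. g (tapped n p c Y))" for Y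
  have IH: "(cube_avg {1..n} g)^(2^s) \<le> cube_avg (positions n T) G"
    using Suc.IH[OF tap_scheme_restrict[OF Suc.prems]] unfolding G_def .
  \<comment> \<open>squaring the induction hypothesis is legitimate: for s = 0 it is an equality,
      otherwise its left-hand side is an even power\<close>
  have "((cube_avg {1..n} g)^(2^s))^2 \<le> (cube_avg (positions n T) G)^2"
  proof (cases s)
    case 0
    have "\<forall>j\<in>{1..n}. p 0 j < T j" using Suc.prems unfolding tap_scheme_def by auto
    then have "cube_avg (positions n T) G = cube_avg {1..n} g"
      using tapped_single[of n p T g] 0 unfolding G_def by simp
    then show ?thesis using 0 by simp
  next
    case (Suc s')
    then have "0 \<le> (cube_avg {1..n} g)^(2^s)" by (simp add: zero_le_even_power)
    then show ?thesis by (rule power_mono[OF IH])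
  qed
  then show ?case
    using tap_product_square_step[OF Suc.prems, of g] unfolding G_def
    by (simp add: power_mult[symmetric] mult.commute)
qed

lemma sgn1_neq: "sgn1 (a \<noteq> b) = sgn1 a * sgn1 b"
  by (cases a; cases b) (simp_all add: sgn1_def)

lemma sgn1_sq: "sgn1 a * sgn1 a = 1"
  by (simp add: sgn1_def)

lemma sgn1_xor_set: "finite A \<Longrightarrow> sgn1 (xor_set A P) = (\<Prod>a\<in>A. sgn1 (P a))"
proof -
  assume "finite A"
  then have "(\<Prod>a\<in>A. sgn1 (P a)) = (-1) ^ card (A \<inter> {x. P x})"
    by (simp add: sgn1_def prod.If_cases)
  also have "A \<inter> {x. P x} = {a\<in>A. P a}" by auto
  finally show ?thesis unfolding xor_set_def sgn1_def by (simp add: minus_one_power_iff)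
qed

lemma bias_F2vec: "bias (F2vec n) h = cube_avg {1..n} (\<lambda>x. sgn1 (h x))"
  unfolding bias_def cube_avg_def F2vec_def by (simp add: card_cube)

definition bit_table :: "nat \<Rightarrow> (nat \<Rightarrow> nat) \<Rightarrow> (nat \<times> nat \<Rightarrow> bool) \<Rightarrow> nat \<Rightarrow> nat \<Rightarrow> bool" where
  "bit_table n T Y = (\<lambda>j\<in>{1..n}. \<lambda>r\<in>{0..<T j}. Y (j, r))"

lemma bit_table_bij: "bij_betw (bit_table n T) (PiE (positions n T) (\<lambda>_. UNIV)) (Bits n T)"
  unfolding Bits_def
proof (rule bij_betw_byWitness[where f'="\<lambda>y. restrict (\<lambda>x. y (fst x) (snd x)) (positions n T)"])
  show "\<forall>Y\<in>PiE (positions n T) (\<lambda>_. UNIV).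
          restrict (\<lambda>x. bit_table n T Y (fst x) (snd x)) (positions n T) = Y"
    by (auto simp: bit_table_def positions_def PiE_def extensional_def fun_eq_iff)
  show "\<forall>y\<in>PiE {1..n} (\<lambda>j. PiE {0..<T j} (\<lambda>_. UNIV)).
          bit_table n T (restrict (\<lambda>x. y (fst x) (snd x)) (positions n T)) = y"
    by (auto simp: bit_table_def positions_def PiE_def extensional_def fun_eq_iff)
qed (auto simp: bit_table_def)

lemma bias_Bits: "bias (Bits n T) h = cube_avg (positions n T) (\<lambda>Y. sgn1 (h (bit_table n T Y)))"
proof -
  have "card (Bits n T) = card (PiE (positions n T) (\<lambda>_. UNIV::bool set))"
    using bij_betw_same_card[OF bit_table_bij] by simp
  then show ?thesis unfolding bias_def cube_avg_def card_cube[OF finite_positions]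
    using sum.reindex_bij_betw[OF bit_table_bij, of "\<lambda>y. sgn1 (h y)"] by simp
qed

lemma parity_check_sign:
  assumes "\<forall>j\<in>{1..n}. T j > 0"
  shows "sgn1 (PC n f T s M t (bit_table n T Y))
       = (\<Prod>c<2^s. sgn1 (f (tapped n (\<lambda>c j. (t + tau s M c) mod T j) c Y)))"
proof -
  have "restrict (\<lambda>j. bit_table n T Y j ((t + tau s M c) mod T j)) {1..n}
      = tapped n (\<lambda>c j. (t + tau s M c) mod T j) c Y" for c
    unfolding tapped_def bit_table_def using assms by (intro restrict_ext) auto
  then show ?thesis unfolding PC_def by (simp add: sgn1_xor_set atLeast0LessThan)
qed

lemma tau_unset_bit:
  assumes "i \<in> {1..s}"
  shows "tau s M c = tau s M (unset_bit (i - 1) c) + (if bit c (i - 1) then M i else 0)"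
proof -
  let ?f = "\<lambda>d i'. if bit d (i' - 1) then M i' else (0::nat)"
  have "tau s M d = ?f d i + sum (?f d) ({1..s} - {i})" for d
    unfolding tau_def using assms by (subst sum.remove[of _ i]) auto
  moreover have "sum (?f (unset_bit (i - 1) c)) ({1..s} - {i}) = sum (?f c) ({1..s} - {i})"
  proof (rule sum.cong[OF refl])
    fix i' assume "i' \<in> {1..s} - {i}"
    then have "i' - 1 \<noteq> i - 1" using assms by auto
    then show "?f (unset_bit (i - 1) c) i' = ?f c i'" by (simp add: bit_unset_bit_iff)
  qed
  ultimately show ?thesis by (simp add: bit_unset_bit_iff)
qed

lemma tau_mod_in_block:
  assumes i: "i \<in> {1..s}" and dvd: "m dvd M i"
    and inj: "inj_on (\<lambda>c. tau s M c mod m) {c\<in>{0..<2^s}. \<not> bit c (i - 1)}"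
    and c: "c < 2^s" "c' < 2^s"
  shows "tau s M c mod m = tau s M c' mod m \<longleftrightarrow> unset_bit (i - 1) c = unset_bit (i - 1) c'"
proof -
  have drop: "tau s M d mod m = tau s M (unset_bit (i - 1) d) mod m" for d
    using tau_unset_bit[OF i, of M d] dvd by (auto simp: mod_add_right_eq[symmetric])
  have half: "unset_bit (i - 1) d \<in> {c\<in>{0..<2^s}. \<not> bit c (i - 1)}" if "d < 2^s" for d :: nat
    using unset_bit_le[of "i - 1" d] that by (auto simp: bit_unset_bit_iff)
  show ?thesis unfolding drop[of c] drop[of c'] using inj_on_eq_iff[OF inj half half] c by blast
qed

definition block_of :: "(nat \<Rightarrow> nat) \<Rightarrow> nat \<Rightarrow> nat" where
  "block_of l j = (LEAST i. j \<le> l (Suc i))"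

lemma block_of_bounds:
  assumes "l 1 = 0" "l (Suc s) = k" "1 \<le> j" "j \<le> k"
  shows "block_of l j \<in> {1..s}" "l (block_of l j) < j" "j \<le> l (Suc (block_of l j))"
proof -
  define i where "i = block_of l j"
  have ex: "j \<le> l (Suc s)" using assms by simp
  have up: "j \<le> l (Suc i)" unfolding i_def block_of_def by (rule LeastI[of _ s]) (rule ex)
  have le: "i \<le> s" unfolding i_def block_of_def by (rule Least_le) (rule ex)
  have pos: "i \<noteq> 0" using up assms(1,3) by (intro notI) simp
  have "\<not> j \<le> l (Suc (i - 1))" unfolding i_def block_of_def
    by (rule not_less_Least) (use pos in \<open>simp add: i_def block_of_def\<close>)
  then show "block_of l j \<in> {1..s}" "l (block_of l j) < j" "j \<le> l (Suc (block_of l j))"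
    using up le pos unfolding i_def by auto
qed

lemma tap_scheme_parity_check:
  fixes T q l :: "nat \<Rightarrow> nat"
  assumes T_pos: "\<forall>j\<in>{1..n}. T j > 0"
    and l_first: "l 1 = 0" and l_last: "l (Suc s) = k" and k_le: "k \<le> n"
    and G1: "\<forall>j\<in>{k<..n}. inj_on (\<lambda>c. tau s (Mblk q l T) c mod T j) {0..<2^s}"
    and G2: "\<forall>i\<in>{1..s}. \<forall>j\<in>{l i<..l (Suc i)}.
               inj_on (\<lambda>c. tau s (Mblk q l T) c mod T j) {c\<in>{0..<2^s}. \<not> bit c (i - 1)}"
  shows "tap_scheme n T (\<lambda>c j. (t + tau s (Mblk q l T) c) mod T j)
           (\<lambda>j. if j \<le> k then block_of l j else 0) s"
  unfolding tap_scheme_def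
proof
  fix j assume j: "j \<in> {1..n}"
  let ?M = "Mblk q l T" and ?b = "if j \<le> k then block_of l j else 0"
  have pattern: "tau s ?M c mod T j = tau s ?M c' mod T j \<longleftrightarrow> same_tap ?b c c'"
    if c: "c < 2^s" "c' < 2^s" for c c' :: nat
  proof (cases "j \<le> k")
    case True
    define i where "i = block_of l j"
    have i: "i \<in> {1..s}" "j \<in> {l i<..l (Suc i)}"
      using block_of_bounds[OF l_first l_last _ True] j unfolding i_def by auto
    then have "T j dvd Lcm (T ` {l i + 1..l (Suc i)})" by (intro dvd_Lcm) auto
    then have "T j dvd ?M i" unfolding Mblk_def by simp
    then show ?thesis
      using tau_mod_in_block[OF i(1) _ _ c] G2 i True unfolding i_def same_tap_def by auto
  next
    case False
    then have "inj_on (\<lambda>c. tau s ?M c mod T j) {0..<2^s}" using G1 j by auto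
    then show ?thesis using c False inj_on_eq_iff by (fastforce simp: same_tap_def)
  qed
  have "?b \<le> s" using block_of_bounds[OF l_first l_last] j by auto
  then show "?b \<le> s \<and> (\<forall>c<2^s. (t + tau s ?M c) mod T j < T j) \<and>
      (\<forall>c<2^s. \<forall>c'<2^s. (t + tau s ?M c) mod T j = (t + tau s ?M c') mod T j
          \<longleftrightarrow> same_tap ?b c c')"
    using T_pos j pattern by (auto simp: nat_mod_eq_iff)
qed

text \<open>For \<alpha> \<in> V_k the linear function contributes nothing: each variable it involves lies in
  a block and is therefore read in equal pairs.\<close>
lemma linear_factors_cancel:
  assumes H: "tap_scheme n T p b s" and blocks: "\<forall>j\<in>{1..n}. j \<le> k \<longrightarrow> b j \<noteq> 0"
    and \<alpha>: "\<alpha> \<in> Vk n k"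
  shows "(\<Prod>c<2^s. sgn1 (lin_fun n \<alpha> (tapped n p c Y))) = 1"
proof -
  have "(\<Prod>c<2^s. sgn1 (lin_fun n \<alpha> (tapped n p c Y)))
      = (\<Prod>c<2^s. \<Prod>j\<in>{1..n}. sgn1 (\<alpha> j \<and> Y (j, p c j)))"
    unfolding lin_fun_def sgn1_xor_set[OF finite_atLeastAtMost] tapped_def
    by (intro prod.cong refl) auto
  also have "\<dots> = (\<Prod>j\<in>{1..n}. \<Prod>c<2^s. sgn1 (\<alpha> j \<and> Y (j, p c j)))" by (rule prod.swap)
  also have "\<dots> = 1"
  proof (rule prod.neutral, rule ballI)
    fix j assume j: "j \<in> {1..n}"
    show "(\<Prod>c<2^s. sgn1 (\<alpha> j \<and> Y (j, p c j))) = 1"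
    proof (cases "\<alpha> j")
      case True
      then have "b j \<noteq> 0" using \<alpha> j blocks unfolding Vk_def by auto
      moreover have "b j \<le> s" and same: "\<And>c c'. c < 2^s \<Longrightarrow> c' < 2^s \<Longrightarrow>
          p c j = p c' j \<longleftrightarrow> same_tap (b j) c c'"
        using H j unfolding tap_scheme_def by auto
      moreover have "unset_bit (b j - 1) c < 2^s" if "c < 2^s" for c :: nat
        using unset_bit_le[of "b j - 1" c] that by linarith
      moreover have "unset_bit i (unset_bit i c) = unset_bit i c" for i c :: nat
        by (rule bit_eqI) (simp add: bit_unset_bit_iff)
      ultimately have "p (unset_bit (b j - 1) c) j = p c j" if "c < 2^s" for c
        using that by (simp add: same_tap_def)
      moreover have "b j - 1 < s" using \<open>b j \<noteq> 0\<close> \<open>b j \<le> s\<close> by simp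
      ultimately show ?thesis
        by (intro prod_unset_bit_invariant_involutive[where i="b j - 1"]) (auto simp: sgn1_sq)
    qed (simp add: sgn1_def)
  qed
  finally show ?thesis .
qed

lemma bias_power_le_parity_check:
  assumes T_pos: "\<forall>j\<in>{1..n}. T j > 0"
    and H: "tap_scheme n T (\<lambda>c j. (t + tau s M c) mod T j) b s"
    and blocks: "\<forall>j\<in>{1..n}. j \<le> k \<longrightarrow> b j \<noteq> 0" and \<alpha>: "\<alpha> \<in> Vk n k"
  shows "(bias (F2vec n) (\<lambda>x. f x \<noteq> lin_fun n \<alpha> x))^(2^s) \<le> bias (Bits n T) (PC n f T s M t)"
proof -
  let ?p = "\<lambda>c j. (t + tau s M c) mod T j"
  let ?g = "\<lambda>x. sgn1 (f x \<noteq> lin_fun n \<alpha> x)"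
  have "(\<Prod>c<2^s. ?g (tapped n ?p c Y))
      = (\<Prod>c<2^s. sgn1 (f (tapped n ?p c Y))) * (\<Prod>c<2^s. sgn1 (lin_fun n \<alpha> (tapped n ?p c Y)))"
    for Y unfolding sgn1_neq by (rule prod.distrib)
  then have products: "(\<Prod>c<2^s. ?g (tapped n ?p c Y)) = sgn1 (PC n f T s M t (bit_table n T Y))" for Y
    using linear_factors_cancel[OF H blocks \<alpha>] parity_check_sign[OF T_pos] by simp
  have "(bias (F2vec n) (\<lambda>x. f x \<noteq> lin_fun n \<alpha> x))^(2^s) = (cube_avg {1..n} ?g)^(2^s)"
    by (simp only: bias_F2vec)
  also have "\<dots> \<le> cube_avg (positions n T) (\<lambda>Y. \<Prod>c<2^s. ?g (tapped n ?p c Y))"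
    by (rule tap_product_ge_power[OF H])
  also have "\<dots> = bias (Bits n T) (PC n f T s M t)"
    by (simp only: products bias_Bits)
  finally show ?thesis .
qed

theorem corollary1:
  fixes n k s t :: nat
    and f :: "(nat \<Rightarrow> bool) \<Rightarrow> bool"
    and T q l :: "nat \<Rightarrow> nat"
  assumes T_pos: "\<forall>j\<in>{1..n}. T j > 0"
    and s_pos: "s \<ge> 1"
    and l_first: "l 1 = 0"
    and l_mono: "\<forall>i\<in>{1..s}. l i < l (Suc i)"
    and l_last: "l (Suc s) = k"
    and k_le: "k \<le> n"
    and q_pos: "\<forall>i\<in>{1..s}. q i > 0"
    and G1: "\<forall>j\<in>{k<..n}. inj_on (\<lambda>c. tau s (Mblk q l T) c mod T j) {0..<2^s}"
    and G2: "\<forall>i\<in>{1..s}. \<forall>j\<in>{l i<..l (Suc i)}.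
               inj_on (\<lambda>c. tau s (Mblk q l T) c mod T j) {c\<in>{0..<2^s}. \<not> bit c (i - 1)}"
  shows "bias (Bits n T) (PC n f T s (Mblk q l T) t)
         \<ge> Max ((\<lambda>\<alpha>. (bias (F2vec n) (\<lambda>x. f x \<noteq> lin_fun n \<alpha> x)) ^ (2^s)) ` Vk n k)"
proof -
  let ?b = "\<lambda>j. if j \<le> k then block_of l j else 0"
  have H: "tap_scheme n T (\<lambda>c j. (t + tau s (Mblk q l T) c) mod T j) ?b s"
    by (rule tap_scheme_parity_check[OF T_pos l_first l_last k_le G1 G2])
  have blocks: "\<forall>j\<in>{1..n}. j \<le> k \<longrightarrow> ?b j \<noteq> 0"
  proof (intro ballI impI)
    fix j assume "j \<in> {1..n}" "j \<le> k"
    then show "?b j \<noteq> 0" using block_of_bounds(1)[OF l_first l_last, of j] by auto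
  qed
  have "finite (Vk n k)"
    by (rule finite_subset[of _ "F2vec n"]) (auto simp: Vk_def F2vec_def intro: finite_PiE)
  moreover have "restrict (\<lambda>_. False) {1..n} \<in> Vk n k" unfolding Vk_def F2vec_def by auto
  ultimately show ?thesis
    using bias_power_le_parity_check[OF T_pos H blocks] by (intro Max.boundedI) auto
qed

end
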